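(* Let $G_m$ be a bounded Vilenkin group. There is a constant $c$ depending only on $m$ such that the following holds. Let $N\in P_+$, $0\le k\le N-1$, $k+1\le l\le N$, and $x\in I_N^{k,l}$. Then for every integer $n\ge M_N$, $$\int_{I_N}|K_n(x-t)|\,d\mu(t)\le \frac{c\,M_lM_k}{M_N^2}.$$
   Context: Let $m=(m_0,m_1,\dots)$ be integers $m_k\ge2$ with $\sup_km_k<\infty$. $G_m=\prod_k Z_{m_k}$ ($Z_{m_k}=\{0,\dots,m_k-1\}$ with addition mod $m_k$) with the product of uniform probability measures $\mu$; $x-t$ is coordinatewise subtraction mod $m_k$. $M_0=1$, $M_{k+1}=m_kM_k$; every $n\in\mathbb N$ is written uniquely as $n=\sum_jn_jM_j$, $n_j\in Z_{m_j}$. $r_k(x)=\exp(2\pi ix_k/m_k)$, $\psi_n=\prod_kr_k^{n_k}$. Dirichlet kernel $D_n=\sum_{k=0}^{n-1}\psi_k$, Fejér kernel $K_n=\frac1n\sum_{k=0}^{n-1}D_k$ ($n\ge1$). $I_N=\{y\in G_m: y_0=\dots=y_{N-1}=0\}$. For $0\le k<l<N$, $I_N^{k,l}$ is the set of $x\in G_m$ with $x_j=0$ for $j<k$, $x_k\ne0$, $x_j=0$ for $k<j<l$, $x_l\neq0$, and $x_{l+1},\dots,x_{N-1}$ (and all later coordinates) arbitrary; for $l=N$, $I_N^{k,N}$ is the set of $x$ with $x_j=0$ for $j<N$, $j\ne k$, and $x_k\neq0$ (later coordinates arbitrary). *)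

theory Defs
  imports "HOL-Probability.Probability"
begin

fun Mseq :: "(nat \<Rightarrow> nat) \<Rightarrow> nat \<Rightarrow> nat" where
  "Mseq m 0 = 1"
| "Mseq m (Suc k) = m k * Mseq m k"

definition digit :: "(nat \<Rightarrow> nat) \<Rightarrow> nat \<Rightarrow> nat \<Rightarrow> nat" where
  "digit m n j = (n div Mseq m j) mod m j"

definition Vspace :: "(nat \<Rightarrow> nat) \<Rightarrow> (nat \<Rightarrow> nat) set" where
  "Vspace m = PiE UNIV (\<lambda>k. {0..<m k})"

definition Vmeasure :: "(nat \<Rightarrow> nat) \<Rightarrow> (nat \<Rightarrow> nat) measure" where
  "Vmeasure m = PiM UNIV (\<lambda>k. uniform_count_measure {0..<m k})"

definition vsub :: "(nat \<Rightarrow> nat) \<Rightarrow> (nat \<Rightarrow> nat) \<Rightarrow> (nat \<Rightarrow> nat) \<Rightarrow> (nat \<Rightarrow> nat)" where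
  "vsub m x t = (\<lambda>k. (x k + m k - t k) mod m k)"

definition rfun :: "(nat \<Rightarrow> nat) \<Rightarrow> nat \<Rightarrow> (nat \<Rightarrow> nat) \<Rightarrow> complex" where
  "rfun m k x = exp (2 * pi * \<i> * of_nat (x k) / of_nat (m k))"

text \<open>psi_n = prod_k r_k^{n_k}; digits n_k vanish for k >= n since M_k >= 2^k > n.\<close>
definition psi :: "(nat \<Rightarrow> nat) \<Rightarrow> nat \<Rightarrow> (nat \<Rightarrow> nat) \<Rightarrow> complex" where
  "psi m n x = (\<Prod>k<n. rfun m k x ^ digit m n k)"

definition Dir :: "(nat \<Rightarrow> nat) \<Rightarrow> nat \<Rightarrow> (nat \<Rightarrow> nat) \<Rightarrow> complex" where
  "Dir m n x = (\<Sum>k<n. psi m k x)"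

definition Fej :: "(nat \<Rightarrow> nat) \<Rightarrow> nat \<Rightarrow> (nat \<Rightarrow> nat) \<Rightarrow> complex" where
  "Fej m n x = (1 / of_nat n) * (\<Sum>k<n. Dir m k x)"

definition Iset :: "(nat \<Rightarrow> nat) \<Rightarrow> nat \<Rightarrow> (nat \<Rightarrow> nat) set" where
  "Iset m N = {y \<in> Vspace m. \<forall>j<N. y j = 0}"

definition Ikl :: "(nat \<Rightarrow> nat) \<Rightarrow> nat \<Rightarrow> nat \<Rightarrow> nat \<Rightarrow> (nat \<Rightarrow> nat) set" where
  "Ikl m N k l =
     (if l < N then
        {x \<in> Vspace m. (\<forall>j<k. x j = 0) \<and> x k \<noteq> 0 \<and> (\<forall>j. k < j \<and> j < l \<longrightarrow> x j = 0) \<and> x l \<noteq> 0}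
      else
        {x \<in> Vspace m. (\<forall>j<N. j \<noteq> k \<longrightarrow> x j = 0) \<and> x k \<noteq> 0})"

end

theory Submission
  imports Defs
begin

(* The estimate is proved pointwise: for t in I_N the point y = x - t agrees with x
   on the first N coordinates, so y_k <> 0 and (if l < N) y_l <> 0.  Writing
   S_n = n K_n = D_0 + ... + D_{n-1} for the summed Dirichlet kernel, we show
   |K_n(y)| <= 4 M_{k+1} M_{l+1} / M_N for n >= M_N; integrating over I_N, which has
   measure 1/M_N, and using M_{j+1} <= (sup m) M_j gives the theorem with c = 4 (sup m)^2.

   The pointwise bound rests on the block structure of the characters:
   psi_{c M_p + b} = psi_{c M_p} psi_b for b < M_p.  Consequently D_{c M_p + b} splits, and
   D_{M_p}(y) = 0 as soon as some coordinate y_j with j < p is nonzero (a full sum of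
   m_j-th roots of unity vanishes).  When D_{M_p}(y) = 0 the partial sums S_n decompose
   into blocks of length M_p, which are estimated twice: with blocks of length M_{k+1}
   for n <= M_N (the block character sums are controlled through y_l), and with blocks
   of length M_N for general n >= M_N. *)

section \<open>Block sizes, digits and coordinates\<close>

lemma Vspace_lt: "x \<in> Vspace m \<Longrightarrow> x j < m j"
  by (auto simp: Vspace_def PiE_def Pi_def)

text \<open>The only information about \<open>x \<in> I\<^sub>N\<^sup>k\<^sup>,\<^sup>l\<close> used: \<open>x\<^sub>k \<noteq> 0\<close>, and \<open>x\<^sub>l \<noteq> 0\<close> when \<open>l < N\<close>.\<close>
lemma Ikl_D:
  assumes "x \<in> Ikl m N k l" and "k < N"
  shows "x \<in> Vspace m" and "x k \<noteq> 0" and "l < N \<Longrightarrow> x l \<noteq> 0"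
  using assms by (auto simp: Ikl_def split: if_splits)

lemma Mseq_dvd: "p \<le> j \<Longrightarrow> Mseq m p dvd Mseq m j"
  by (induction j) (auto simp: le_Suc_eq)

lemma digit_eq_0: "n < Mseq m j \<Longrightarrow> digit m n j = 0"
  by (simp add: digit_def)

lemma digit_multiple_low:
  assumes "j < p"
  shows "digit m (c * Mseq m p) j = 0"
proof -
  obtain d where "Mseq m p = m j * Mseq m j * d"
    using Mseq_dvd[of "Suc j" p m] assms by (auto elim: dvdE)
  then show ?thesis
    by (cases "Mseq m j = 0") (simp_all add: digit_def)
qed

section \<open>Characters and Dirichlet kernels: elementary facts\<close>

text \<open>The summed Dirichlet kernel \<open>S\<^sub>n = D\<^sub>0 + \<dots> + D\<^sub>n\<^sub>-\<^sub>1 = n K\<^sub>n\<close>.\<close>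
definition DirSum :: "(nat \<Rightarrow> nat) \<Rightarrow> nat \<Rightarrow> (nat \<Rightarrow> nat) \<Rightarrow> complex" where
  "DirSum m n x = (\<Sum>j<n. Dir m j x)"

lemma Fej_eq_DirSum: "Fej m n x = DirSum m n x / of_nat n"
  by (simp add: Fej_def DirSum_def)

lemma sum_lessThan_add: "(\<Sum>j<a + (b::nat). g j) = (\<Sum>j<a. g j) + (\<Sum>e<b. g (a + e))"
  by (induction b) (auto simp: add.assoc)

lemma psi_cong:
  assumes "\<And>j. digit m n j \<noteq> 0 \<Longrightarrow> x j = x' j"
  shows "psi m n x = psi m n x'"
  unfolding psi_def by (rule prod.cong[OF refl]) (metis assms power_0 rfun_def)

lemma norm_rfun: "cmod (rfun m k x) = 1"
proof -
  have "2 * pi * \<i> * of_nat (x k) / of_nat (m k) = \<i> * complex_of_real (2 * pi * x k / m k)"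
    by simp
  then show ?thesis
    unfolding rfun_def by (simp only: norm_exp_i_times)
qed

lemma norm_psi: "cmod (psi m n x) = 1"
  by (simp add: psi_def prod_norm[symmetric] norm_power norm_rfun)

lemma norm_sum_psi_le: "cmod (\<Sum>i\<in>A. psi m (f i) x) \<le> card A"
  using norm_sum[of "\<lambda>i. psi m (f i) x" A] by (simp add: norm_psi)

lemma norm_Dir_le: "cmod (Dir m n x) \<le> n"
  unfolding Dir_def using norm_sum_psi_le[where f=id and A="{..<n}"] by simp

lemma norm_DirSum_le: "cmod (DirSum m n x) \<le> real n * real n"
proof -
  have "cmod (DirSum m n x) \<le> (\<Sum>j<n. cmod (Dir m j x))"
    unfolding DirSum_def by (rule norm_sum)
  also have "\<dots> \<le> (\<Sum>j<n. real n)"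
    by (intro sum_mono order_trans[OF norm_Dir_le]) simp
  finally show ?thesis by simp
qed

text \<open>If \<open>0 < x\<^sub>q < m\<^sub>q\<close>, then \<open>r\<^sub>q(x)\<close> is a nontrivial \<open>m\<^sub>q\<close>-th root of unity, so the sum of its
  powers vanishes; this is the source of all cancellation in the Dirichlet kernels.\<close>
lemma sum_rfun_powers_eq_0:
  assumes "0 < x q" "x q < m q"
  shows "(\<Sum>c<m q. rfun m q x ^ c) = 0"
proof -
  let ?a = "2 * pi * \<i> * of_nat (x q) / of_nat (m q)"
  have "rfun m q x ^ m q = exp (of_nat (m q) * ?a)"
    unfolding rfun_def by (rule exp_of_nat_mult[symmetric])
  also have "of_nat (m q) * ?a = of_nat (x q) * (2 * of_real pi * \<i>)"
    using assms by (simp add: field_simps)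
  also have "exp \<dots> = 1"
    by (simp only: exp_of_nat_mult exp_two_pi_i) simp
  finally have root: "rfun m q x ^ m q = 1" .
  have nontrivial: "rfun m q x \<noteq> 1"
  proof
    assume "rfun m q x = 1"
    then obtain n :: int where "Im ?a = of_int (2 * n) * pi"
      unfolding rfun_def exp_eq_1 by blast
    moreover have "Im ?a = 2 * pi * (real (x q) / real (m q))"
      by (simp add: Im_divide_of_real[symmetric] del: Im_divide_of_real)
    ultimately have "2 * pi * (real (x q) / real (m q)) = 2 * pi * of_int n"
      by (simp add: algebra_simps)
    then have "real (x q) / real (m q) = of_int n"
      by (subst (asm) mult_left_cancel) auto
    moreover have "0 < real (x q) / real (m q)" "real (x q) / real (m q) < 1"
      using assms by auto
    ultimately show False by simp
  qed
  show ?thesis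
    using root nontrivial by (simp add: sum_gp_strict)
qed

locale vilenkin =
  fixes m :: "nat \<Rightarrow> nat"
  assumes m_ge2: "\<And>k. 2 \<le> m k"
begin

lemma m_pos: "0 < m k"
  using m_ge2[of k] by linarith

lemma Mseq_pos: "0 < Mseq m j"
  by (induction j) (simp_all add: m_pos)

lemma Mseq_gt: "j < Mseq m j"
proof (induction j)
  case (Suc j)
  have "Suc j < 2 * Mseq m j"
    using Suc by linarith
  also have "\<dots> \<le> m j * Mseq m j"
    using m_ge2[of j] by simp
  finally show ?case by simp
qed simp

lemma Mseq_mono: "p \<le> j \<Longrightarrow> Mseq m p \<le> Mseq m j"
  by (rule dvd_imp_le[OF Mseq_dvd Mseq_pos])

lemma digit_block_add:
  assumes b: "b < Mseq m p"
  shows "digit m (c * Mseq m p + b) j = digit m (c * Mseq m p) j + digit m b j"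
proof (cases "j < p")
  case True
  obtain d where d: "Mseq m p = m j * Mseq m j * d"
    using Mseq_dvd[of "Suc j" p m] True by (auto elim: dvdE)
  have "(c * Mseq m p + b) div Mseq m j = (b + (c * d * m j) * Mseq m j) div Mseq m j"
    by (simp add: d ac_simps)
  also have "\<dots> = b div Mseq m j + c * d * m j"
    using Mseq_pos[of j] by simp
  finally show ?thesis
    using digit_multiple_low[OF True] by (simp add: digit_def)
next
  case False
  then obtain r where r: "Mseq m j = Mseq m p * r"
    using Mseq_dvd[of p j m] by (auto elim: dvdE)
  have "b < Mseq m j"
    using b Mseq_mono[of p j] False by simp
  moreover have "(c * Mseq m p + b) div Mseq m j = (c * Mseq m p) div Mseq m j"
    using b Mseq_pos[of p] by (simp add: r div_mult2_eq)
  ultimately show ?thesis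
    by (simp add: digit_def digit_eq_0)
qed

section \<open>Block structure of the characters\<close>

text \<open>Only the first \<open>L \<ge> n\<close> factors can contribute to \<open>\<psi>\<^sub>n\<close>: digits at positions \<open>j \<ge> n\<close>
  vanish because \<open>n \<le> j < M\<^sub>j\<close>.\<close>
lemma psi_extend:
  assumes "n \<le> L"
  shows "psi m n x = (\<Prod>j<L. rfun m j x ^ digit m n j)"
  unfolding psi_def
proof (rule prod.mono_neutral_left)
  show "\<forall>j\<in>{..<L} - {..<n}. rfun m j x ^ digit m n j = 1"
  proof
    fix j assume "j \<in> {..<L} - {..<n}"
    then have "n < Mseq m j"
      using Mseq_gt[of j] by simp
    then show "rfun m j x ^ digit m n j = 1"
      by (simp add: digit_eq_0)
  qed
qed (use assms in auto)

lemma psi_block_mult: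
  assumes "b < Mseq m p"
  shows "psi m (c * Mseq m p + b) x = psi m (c * Mseq m p) x * psi m b x"
proof -
  let ?L = "c * Mseq m p + b"
  have "psi m ?L x = (\<Prod>j<?L. rfun m j x ^ digit m (c * Mseq m p) j * rfun m j x ^ digit m b j)"
    by (simp add: psi_extend[of ?L ?L] digit_block_add[OF assms] power_add)
  also have "\<dots> = psi m (c * Mseq m p) x * psi m b x"
    by (simp add: prod.distrib psi_extend[of "c * Mseq m p" ?L] psi_extend[of b ?L])
  finally show ?thesis .
qed

text \<open>For \<open>c < m\<^sub>q\<close>, the only nonzero digit of \<open>c M\<^sub>q\<close> is the digit \<open>c\<close> at position \<open>q\<close>.\<close>
lemma psi_multiple_Mseq:
  assumes c: "c < m q"
  shows "psi m (c * Mseq m q) x = rfun m q x ^ c"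
proof -
  have digit: "digit m (c * Mseq m q) j = (if j = q then c else 0)" for j
  proof -
    consider "j < q" | "j = q" | "q < j" by arith
    then show ?thesis
    proof cases
      case 1
      then show ?thesis using digit_multiple_low by simp
    next
      case 2
      then show ?thesis using Mseq_pos[of q] c by (simp add: digit_def)
    next
      case 3
      have "c * Mseq m q < Mseq m (Suc q)"
        using c Mseq_pos[of q] by simp
      also have "\<dots> \<le> Mseq m j"
        using 3 Mseq_mono[of "Suc q" j] by simp
      finally show ?thesis using 3 digit_eq_0 by auto
    qed
  qed
  have "psi m (c * Mseq m q) x = (\<Prod>j<Suc q + c * Mseq m q. if j = q then rfun m q x ^ c else 1)"
    by (simp add: psi_extend[of _ "Suc q + c * Mseq m q"] digit if_distrib cong: if_cong)
  also have "\<dots> = rfun m q x ^ c"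
    by (subst prod.delta) auto
  finally show ?thesis .
qed

lemma psi_eq_1_if_low_zero:
  assumes "\<forall>j<p. x j = 0" and "e < Mseq m p"
  shows "psi m e x = 1"
  unfolding psi_def
proof (intro prod.neutral ballI)
  fix j assume "j \<in> {..<e}"
  show "rfun m j x ^ digit m e j = 1"
  proof (cases "j < p")
    case True
    then show ?thesis using assms(1) by (simp add: rfun_def)
  next
    case False
    then have "e < Mseq m j"
      using assms(2) Mseq_mono[of p j] by simp
    then show ?thesis by (simp add: digit_eq_0)
  qed
qed

section \<open>Dirichlet kernels\<close>

lemma Dir_block:
  assumes "b \<le> Mseq m p"
  shows "Dir m (c * Mseq m p + b) x = Dir m (c * Mseq m p) x + psi m (c * Mseq m p) x * Dir m b x"
proof -
  have "Dir m (c * Mseq m p + b) x = Dir m (c * Mseq m p) x + (\<Sum>e<b. psi m (c * Mseq m p + e) x)"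
    unfolding Dir_def by (rule sum_lessThan_add)
  also have "(\<Sum>e<b. psi m (c * Mseq m p + e) x) = (\<Sum>e<b. psi m (c * Mseq m p) x * psi m e x)"
    using assms by (intro sum.cong refl psi_block_mult) auto
  finally show ?thesis by (simp add: Dir_def sum_distrib_left)
qed

lemma Dir_multiple:
  "Dir m (c * Mseq m p) x = (\<Sum>i<c. psi m (i * Mseq m p) x) * Dir m (Mseq m p) x"
proof (induction c)
  case (Suc c)
  have "Dir m (Suc c * Mseq m p) x = Dir m (c * Mseq m p + Mseq m p) x"
    by (simp add: add.commute)
  also have "\<dots> = Dir m (c * Mseq m p) x + psi m (c * Mseq m p) x * Dir m (Mseq m p) x"
    by (rule Dir_block) simp
  finally show ?case using Suc by (simp add: distrib_right)
qed (simp add: Dir_def)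

lemma Dir_Mseq_Suc:
  "Dir m (Mseq m (Suc q)) x = (\<Sum>c<m q. rfun m q x ^ c) * Dir m (Mseq m q) x"
  using Dir_multiple[of "m q" q x] by (simp add: psi_multiple_Mseq)

lemma Dir_Mseq_eq_0:
  assumes x: "x \<in> Vspace m" and "j < q" "x j \<noteq> 0"
  shows "Dir m (Mseq m q) x = 0"
  using assms(2,3)
proof (induction q)
  case (Suc q)
  have "(\<Sum>c<m q. rfun m q x ^ c) = 0 \<or> Dir m (Mseq m q) x = 0"
    using Suc Vspace_lt[OF x, of q] by (cases "j = q") (auto intro: sum_rfun_powers_eq_0)
  then show ?case
    unfolding Dir_Mseq_Suc by auto
qed simp

lemma Dir_Mseq_eq_Mseq:
  assumes "\<forall>j<p. x j = 0"
  shows "Dir m (Mseq m p) x = of_nat (Mseq m p)"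
  unfolding Dir_def using psi_eq_1_if_low_zero[OF assms] by simp

lemma norm_Dir_le_mod:
  assumes "Dir m (Mseq m q) x = 0"
  shows "cmod (Dir m n x) \<le> n mod Mseq m q"
proof -
  let ?M = "Mseq m q"
  have "n mod ?M \<le> ?M"
    using Mseq_pos[of q] by simp
  then have "Dir m (n div ?M * ?M + n mod ?M) x = psi m (n div ?M * ?M) x * Dir m (n mod ?M) x"
    using assms by (simp add: Dir_block Dir_multiple)
  then have "Dir m n x = psi m (n div ?M * ?M) x * Dir m (n mod ?M) x"
    by (simp only: div_mult_mod_eq)
  then show ?thesis
    using norm_Dir_le[of m "n mod ?M" x] by (simp add: norm_mult norm_psi)
qed

section \<open>Summed Dirichlet kernels\<close>

lemma DirSum_block:
  assumes zero: "Dir m (Mseq m p) x = 0" and B: "B \<le> Mseq m p"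
  shows "DirSum m (A * Mseq m p + B) x =
           (\<Sum>c<A. psi m (c * Mseq m p) x) * DirSum m (Mseq m p) x
           + psi m (A * Mseq m p) x * DirSum m B x"
proof -
  have shift: "DirSum m (A * Mseq m p + B) x =
                 DirSum m (A * Mseq m p) x + psi m (A * Mseq m p) x * DirSum m B x"
    if "B \<le> Mseq m p" for A B
  proof -
    have "DirSum m (A * Mseq m p + B) x = DirSum m (A * Mseq m p) x + (\<Sum>e<B. Dir m (A * Mseq m p + e) x)"
      unfolding DirSum_def by (rule sum_lessThan_add)
    also have "(\<Sum>e<B. Dir m (A * Mseq m p + e) x) = (\<Sum>e<B. psi m (A * Mseq m p) x * Dir m e x)"
      using that zero by (intro sum.cong refl) (simp add: Dir_block Dir_multiple)
    finally show ?thesis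
      by (simp add: DirSum_def sum_distrib_left)
  qed
  have full: "DirSum m (A * Mseq m p) x = (\<Sum>c<A. psi m (c * Mseq m p) x) * DirSum m (Mseq m p) x" for A
  proof (induction A)
    case (Suc A)
    have "DirSum m (Suc A * Mseq m p) x = DirSum m (A * Mseq m p + Mseq m p) x"
      by (simp add: add.commute)
    also have "\<dots> = DirSum m (A * Mseq m p) x + psi m (A * Mseq m p) x * DirSum m (Mseq m p) x"
      by (rule shift) simp
    finally show ?case
      using Suc by (simp add: distrib_right)
  qed (simp add: DirSum_def)
  show ?thesis
    using shift[OF B] full by simp
qed

lemma norm_DirSum_le_blocks:
  assumes "Dir m (Mseq m p) x = 0"
  shows "cmod (DirSum m n x) \<le>
           cmod (\<Sum>c<n div Mseq m p. psi m (c * Mseq m p) x) * cmod (DirSum m (Mseq m p) x)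
           + cmod (DirSum m (n mod Mseq m p) x)"
proof -
  have "n mod Mseq m p \<le> Mseq m p"
    using Mseq_pos[of p] by (simp add: less_imp_le)
  then have "DirSum m n x =
               (\<Sum>c<n div Mseq m p. psi m (c * Mseq m p) x) * DirSum m (Mseq m p) x
               + psi m (n div Mseq m p * Mseq m p) x * DirSum m (n mod Mseq m p) x"
    using DirSum_block[OF assms, of "n mod Mseq m p" "n div Mseq m p"] by (simp only: div_mult_mod_eq)
  then show ?thesis
    by (simp add: norm_triangle_le norm_mult norm_psi)
qed

text \<open>The block character sums \<open>\<Sum>\<^sub>c\<^sub><\<^sub>A \<psi>\<^bsub>c M\<^sub>p\<^esub>(y)\<close> are controlled by any nonzero coordinate
  \<open>y\<^sub>l\<close> with \<open>l \<ge> p\<close>: after clearing the coordinates below \<open>p\<close> (which these characters ignore),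
  the sum becomes \<open>D\<^bsub>A M\<^sub>p\<^esub> / M\<^sub>p\<close>, and \<open>D\<^bsub>M\<^sub>l\<^sub>+\<^sub>1\<^esub>\<close> vanishes there.\<close>
lemma norm_sum_psi_multiples_le:
  assumes y: "y \<in> Vspace m" and "p \<le> l" and "y l \<noteq> 0"
  shows "cmod (\<Sum>c<A. psi m (c * Mseq m p) y) * real (Mseq m p) \<le> real (Mseq m (Suc l))"
proof -
  define y' where "y' = (\<lambda>j. if j < p then 0 else y j)"
  have y'_V: "y' \<in> Vspace m"
    using y m_pos by (auto simp: y'_def Vspace_def PiE_def Pi_def extensional_def)
  have same: "psi m (c * Mseq m p) y = psi m (c * Mseq m p) y'" for c
    by (rule psi_cong) (metis digit_multiple_low y'_def)
  have "Dir m (A * Mseq m p) y' = (\<Sum>c<A. psi m (c * Mseq m p) y') * of_nat (Mseq m p)"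
    by (simp add: Dir_multiple Dir_Mseq_eq_Mseq y'_def del: Mseq.simps)
  then have "cmod (\<Sum>c<A. psi m (c * Mseq m p) y) * real (Mseq m p) = cmod (Dir m (A * Mseq m p) y')"
    by (simp add: same norm_mult del: Mseq.simps)
  also have "\<dots> \<le> (A * Mseq m p) mod Mseq m (Suc l)"
    using assms by (intro norm_Dir_le_mod Dir_Mseq_eq_0[OF y'_V, of l]) (auto simp: y'_def)
  also have "\<dots> \<le> Mseq m (Suc l)"
    using Mseq_pos[of "Suc l"] by (simp del: Mseq.simps)
  finally show ?thesis .
qed

section \<open>Pointwise estimate of the Fejer kernel\<close>

text \<open>Partial sums of length at most \<open>M\<^sub>N\<close>, cut into blocks of length \<open>M\<^sub>k\<^sub>+\<^sub>1\<close>: the block character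
  sums are bounded through \<open>y\<^sub>l\<close> if \<open>l < N\<close>, and trivially by \<open>B \<le> M\<^sub>N\<close> if \<open>l = N\<close>.\<close>
lemma norm_DirSum_le_short:
  assumes y: "y \<in> Vspace m" and yk: "y k \<noteq> 0" and kl: "k < l" and lN: "l \<le> N"
    and yl: "l < N \<Longrightarrow> y l \<noteq> 0" and B: "B \<le> Mseq m N"
  shows "cmod (DirSum m B y) \<le> 2 * real (Mseq m (Suc k)) * real (Mseq m (Suc l))"
proof -
  let ?P = "Mseq m (Suc k)" and ?R = "real (Mseq m (Suc l))"
  let ?chars = "\<Sum>c<B div ?P. psi m (c * ?P) y"
  have zero: "Dir m ?P y = 0"
    using Dir_Mseq_eq_0[OF y, of k "Suc k"] yk by simp
  have chars: "cmod ?chars * real ?P \<le> ?R"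
  proof (cases "l < N")
    case True
    then show ?thesis
      using norm_sum_psi_multiples_le[OF y, of "Suc k" l] kl yl by simp
  next
    case False
    have "cmod ?chars * real ?P \<le> real (B div ?P) * real ?P"
      using norm_sum_psi_le[of m _ y "{..<B div ?P}"] by (intro mult_right_mono) simp_all
    also have "\<dots> \<le> real (Mseq m N)"
      using B div_times_less_eq_dividend[of B ?P] by (simp only: of_nat_mult[symmetric] of_nat_le_iff)
    also have "\<dots> \<le> ?R"
      using False lN Mseq_mono[of N "Suc l"] by (simp del: Mseq.simps)
    finally show ?thesis .
  qed
  have P_le_R: "real ?P \<le> ?R"
    using Mseq_mono[of "Suc k" "Suc l"] kl by (simp del: Mseq.simps)
  have rest: "cmod (DirSum m (B mod ?P) y) \<le> real ?P * real ?P"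
  proof -
    have "real (B mod ?P) \<le> real ?P"
      using Mseq_pos[of "Suc k"] by (simp del: Mseq.simps)
    then show ?thesis
      by (intro order_trans[OF norm_DirSum_le] mult_mono) simp_all
  qed
  have "cmod (DirSum m B y) \<le> cmod ?chars * cmod (DirSum m ?P y) + cmod (DirSum m (B mod ?P) y)"
    by (rule norm_DirSum_le_blocks[OF zero])
  also have "\<dots> \<le> (cmod ?chars * real ?P) * real ?P + real ?P * real ?P"
    using norm_DirSum_le[of m ?P y] rest by (simp add: mult_left_mono add_mono mult.assoc)
  also have "\<dots> \<le> ?R * real ?P + ?R * real ?P"
    by (intro add_mono mult_right_mono chars P_le_R) simp_all
  finally show ?thesis
    by (simp add: ac_simps del: Mseq.simps)
qed

text \<open>Partial sums of arbitrary length \<open>n \<ge> M\<^sub>N\<close>, cut into blocks of length \<open>M\<^sub>N\<close>: there are at most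
  \<open>n / M\<^sub>N + 1 \<le> 2n / M\<^sub>N\<close> blocks, each bounded by the estimate for short sums.\<close>
lemma norm_Fej_le_from_short:
  assumes zero: "Dir m (Mseq m N) y = 0"
    and short: "\<And>B. B \<le> Mseq m N \<Longrightarrow> cmod (DirSum m B y) \<le> K"
    and n: "Mseq m N \<le> n"
  shows "cmod (Fej m n y) \<le> 2 * K / real (Mseq m N)"
proof -
  let ?P = "Mseq m N" and ?A = "n div Mseq m N"
  have P_pos: "0 < real ?P" and n_pos: "0 < real n"
    using Mseq_pos[of N] n by simp_all
  have K_nonneg: "0 \<le> K"
    using short[of 0] by (simp add: DirSum_def)
  have "cmod (DirSum m n y) \<le>
          cmod (\<Sum>c<?A. psi m (c * ?P) y) * cmod (DirSum m ?P y) + cmod (DirSum m (n mod ?P) y)"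
    by (rule norm_DirSum_le_blocks[OF zero])
  also have "\<dots> \<le> real ?A * K + K"
    using norm_sum_psi_le[of m _ y "{..<?A}"] short[of ?P] short[of "n mod ?P"] Mseq_pos[of N] K_nonneg
    by (intro add_mono mult_mono) simp_all
  finally have sum_bound: "cmod (DirSum m n y) \<le> (real ?A + 1) * K"
    by (simp add: algebra_simps)
  have "real ?A * real ?P \<le> real n"
    using div_times_less_eq_dividend[of n ?P] by (simp only: of_nat_mult[symmetric] of_nat_le_iff)
  then have "(real ?A + 1) * real ?P \<le> 2 * real n"
    using n by (simp add: algebra_simps)
  then have "(real ?A + 1) * K * real ?P \<le> 2 * K * real n"
    using K_nonneg by (simp add: mult_left_mono mult.commute mult.left_commute)
  then have "(real ?A + 1) * K / real n \<le> 2 * K / real ?P"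
    using P_pos n_pos by (simp add: field_simps)
  moreover have "cmod (Fej m n y) \<le> (real ?A + 1) * K / real n"
    using sum_bound n_pos by (simp add: Fej_eq_DirSum norm_divide divide_right_mono)
  ultimately show ?thesis by linarith
qed

lemma norm_Fej_le:
  assumes y: "y \<in> Vspace m" and yk: "y k \<noteq> 0" and kl: "k < l" and lN: "l \<le> N"
    and yl: "l < N \<Longrightarrow> y l \<noteq> 0" and n: "Mseq m N \<le> n"
  shows "cmod (Fej m n y) \<le> 4 * real (Mseq m (Suc k)) * real (Mseq m (Suc l)) / real (Mseq m N)"
proof -
  have "Dir m (Mseq m N) y = 0"
    using Dir_Mseq_eq_0[OF y, of k N] yk kl lN by simp
  from norm_Fej_le_from_short[OF this norm_DirSum_le_short[OF y yk kl lN yl] n]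
  show ?thesis by simp
qed

section \<open>Integration over \<open>I\<^sub>N\<close>\<close>

lemma Iset_eq_prod_emb:
  "Iset m N = prod_emb UNIV (\<lambda>k. uniform_count_measure {0..<m k}) {..<N} (PiE {..<N} (\<lambda>_. {0}))"
  unfolding Iset_def Vspace_def prod_emb_def space_PiM space_uniform_count_measure
  by (auto simp: PiE_iff restrict_def fun_eq_iff) (metis (full_types))

lemma Iset_sets: "Iset m N \<in> sets (Vmeasure m)"
  unfolding Iset_eq_prod_emb Vmeasure_def
  by (rule sets_PiM_I) (auto simp: sets_uniform_count_measure m_pos)

lemma emeasure_Iset: "emeasure (Vmeasure m) (Iset m N) = ennreal (1 / real (Mseq m N))"
proof -
  have "emeasure (Vmeasure m) (Iset m N) = (\<Prod>i<N. emeasure (uniform_count_measure {0..<m i}) {0})"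
    unfolding Iset_eq_prod_emb Vmeasure_def
    by (rule emeasure_PiM_emb)
       (auto intro!: prob_space_uniform_count_measure simp: sets_uniform_count_measure m_pos)
  also have "\<dots> = (\<Prod>i<N. ennreal (1 / real (m i)))"
    using m_pos by (intro prod.cong refl)
      (simp add: emeasure_uniform_count_measure ennreal_of_nat_eq_real_of_nat divide_ennreal)
  also have "\<dots> = ennreal (\<Prod>i<N. 1 / real (m i))"
    by (simp add: prod_ennreal)
  also have "(\<Prod>i<N. 1 / real (m i)) = 1 / real (Mseq m N)"
    by (induction N) simp_all
  finally show ?thesis .
qed

lemma nn_integral_Iset_le:
  assumes "\<And>t. t \<in> Iset m N \<Longrightarrow> f t \<le> C"
  shows "(\<integral>\<^sup>+ t \<in> Iset m N. ennreal (f t) \<partial>Vmeasure m) \<le> ennreal (C / real (Mseq m N))"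
proof -
  have "(\<integral>\<^sup>+ t \<in> Iset m N. ennreal (f t) \<partial>Vmeasure m) \<le> (\<integral>\<^sup>+ t. ennreal C * indicator (Iset m N) t \<partial>Vmeasure m)"
    using assms by (intro nn_integral_mono) (auto simp: indicator_def intro!: ennreal_leI)
  also have "\<dots> = ennreal C * ennreal (1 / real (Mseq m N))"
    by (simp add: nn_integral_cmult_indicator[OF Iset_sets] emeasure_Iset)
  also have "\<dots> = ennreal (C / real (Mseq m N))"
    by (simp add: ennreal_mult''[symmetric])
  finally show ?thesis .
qed

lemma vsub_Iset:
  assumes x: "x \<in> Vspace m" and t: "t \<in> Iset m N"
  shows "vsub m x t \<in> Vspace m" and "j < N \<Longrightarrow> vsub m x t j = x j"
  using m_pos Vspace_lt[OF x, of j] t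
  by (auto simp: vsub_def Vspace_def Iset_def PiE_def Pi_def extensional_def)

text \<open>The pointwise bound in the form needed for the theorem, at \<open>y = x - t\<close> with \<open>t \<in> I\<^sub>N\<close>,
  using \<open>M\<^sub>j\<^sub>+\<^sub>1 \<le> b M\<^sub>j\<close> for a bound \<open>b\<close> of the sequence \<open>m\<close>.\<close>
lemma norm_Fej_vsub_le:
  assumes b: "\<And>k. m k \<le> b" and x: "x \<in> Ikl m N k l" and kl: "k < l" and lN: "l \<le> N"
    and n: "Mseq m N \<le> n" and t: "t \<in> Iset m N"
  shows "cmod (Fej m n (vsub m x t)) \<le>
           4 * real b ^ 2 * real (Mseq m l) * real (Mseq m k) / real (Mseq m N)"
proof -
  have Mseq_Suc_le: "real (Mseq m (Suc j)) \<le> real b * real (Mseq m j)" for j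
    using b[of j] by (simp add: mult_right_mono)
  note x_props = Ikl_D[OF x order_less_le_trans[OF kl lN]]
  have "cmod (Fej m n (vsub m x t)) \<le>
          4 * real (Mseq m (Suc k)) * real (Mseq m (Suc l)) / real (Mseq m N)"
    using x_props vsub_Iset[OF x_props(1) t] kl lN n by (intro norm_Fej_le) auto
  also have "\<dots> \<le> 4 * (real b * real (Mseq m k)) * (real b * real (Mseq m l)) / real (Mseq m N)"
    by (intro divide_right_mono mult_mono mult_left_mono Mseq_Suc_le) auto
  finally show ?thesis
    by (simp add: power2_eq_square ac_simps)
qed

end

theorem lemma4:
  fixes m :: "nat \<Rightarrow> nat"
  assumes m_ge2: "\<And>k. m k \<ge> 2"
    and m_bdd: "\<exists>B. \<forall>k. m k \<le> B"
  shows "\<exists>c::real. \<forall>N k l x n. 0 < N \<longrightarrow> k < N \<longrightarrow> k + 1 \<le> l \<longrightarrow> l \<le> N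
           \<longrightarrow> x \<in> Ikl m N k l \<longrightarrow> Mseq m N \<le> n \<longrightarrow>
           (\<integral>\<^sup>+ t \<in> Iset m N. ennreal (cmod (Fej m n (vsub m x t))) \<partial>Vmeasure m)
             \<le> ennreal (c * real (Mseq m l) * real (Mseq m k) / real (Mseq m N) ^ 2)"
proof -
  interpret vilenkin m
    by unfold_locales (rule m_ge2)
  obtain b where b: "\<And>k. m k \<le> b"
    using m_bdd by blast
  show ?thesis
  proof (intro exI[of _ "4 * real b ^ 2"] allI impI)
    fix N k l x n
    assume "0 < N" "k < N" "k + 1 \<le> l" "l \<le> N" "x \<in> Ikl m N k l" "Mseq m N \<le> n"
    then have "\<And>t. t \<in> Iset m N \<Longrightarrow> cmod (Fej m n (vsub m x t)) \<le>
                 4 * real b ^ 2 * real (Mseq m l) * real (Mseq m k) / real (Mseq m N)"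
      by (intro norm_Fej_vsub_le[OF b]) auto
    from nn_integral_Iset_le[OF this]
    show "(\<integral>\<^sup>+ t \<in> Iset m N. ennreal (cmod (Fej m n (vsub m x t))) \<partial>Vmeasure m)
            \<le> ennreal (4 * real b ^ 2 * real (Mseq m l) * real (Mseq m k) / real (Mseq m N) ^ 2)"
      by (simp add: power2_eq_square)
  qed
qed

end
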